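(* Let $(T(t))_{t\ge0}$ be a bounded $C_0$-semigroup on a Banach space $E$ that is norm continuous at infinity. Then for every $t_1,\dots,t_n>0$, $$\ker(T(t_1)-\mathrm{Id})(T(t_2)-\mathrm{Id})\cdots(T(t_n)-\mathrm{Id})\subseteq E_{\mathrm{aap}}.$$
   Context: $E_{\mathrm{aap}}$ is the set of $x\in E$ with $\{T(t)x:t\ge0\}$ relatively compact. With $\omega_0=\omega_0(T)=\inf\{\omega\in\mathbb{R}:\exists M,\ \|T(t)\|\le Me^{\omega t}\ \forall t\ge0\}$ the growth bound, the semigroup is norm continuous at infinity (asymptotically norm continuous) if $\lim_{t\to\infty}\limsup_{h\downarrow0}\|e^{-\omega_0t}T(t)(\mathrm{Id}-e^{-\omega_0h}T(h))\|=0$. *)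

theory Defs
  imports "HOL-Analysis.Analysis"
begin

text \<open>A C_0-semigroup on a Banach space: only the values for t \<ge> 0 matter.\<close>
definition C0_semigroup :: "(real \<Rightarrow> ('a::banach \<Rightarrow>\<^sub>L 'a)) \<Rightarrow> bool" where
  "C0_semigroup T \<longleftrightarrow>
     T 0 = id_blinfun \<and>
     (\<forall>s t. 0 \<le> s \<longrightarrow> 0 \<le> t \<longrightarrow> T (s + t) = T s o\<^sub>L T t) \<and>
     (\<forall>x. ((\<lambda>t. T t x) \<longlongrightarrow> x) (at_right 0))"

definition bounded_semigroup :: "(real \<Rightarrow> ('a::real_normed_vector \<Rightarrow>\<^sub>L 'a)) \<Rightarrow> bool" where
  "bounded_semigroup T \<longleftrightarrow> (\<exists>M. \<forall>t\<ge>0. norm (T t) \<le> M)"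

text \<open>Growth bound, as an extended real (it may be -\<infinity>).\<close>
definition growth_bound :: "(real \<Rightarrow> ('a::real_normed_vector \<Rightarrow>\<^sub>L 'a)) \<Rightarrow> ereal" where
  "growth_bound T = Inf {ereal \<omega> | \<omega>. \<exists>M. \<forall>t\<ge>0. norm (T t) \<le> M * exp (\<omega> * t)}"

text \<open>The defining formula only makes sense for a finite
  growth bound; for growth bound -\<infinity> we impose no condition (this only weakens the
  hypothesis of the theorem).\<close>
definition norm_continuous_at_infinity :: "(real \<Rightarrow> ('a::real_normed_vector \<Rightarrow>\<^sub>L 'a)) \<Rightarrow> bool" where
  "norm_continuous_at_infinity T \<longleftrightarrow>
     (growth_bound T \<noteq> -\<infinity> \<longrightarrow>
       (let w = real_of_ereal (growth_bound T) in
        ((\<lambda>t. Limsup (at_right 0)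
            (\<lambda>h. ereal (norm ((exp (- w * t) *\<^sub>R T t) o\<^sub>L (id_blinfun - exp (- w * h) *\<^sub>R T h)))))
          \<longlongrightarrow> 0) at_top))"

definition E_aap :: "(real \<Rightarrow> ('a::real_normed_vector \<Rightarrow>\<^sub>L 'a)) \<Rightarrow> 'a set" where
  "E_aap T = {x. compact (closure ((\<lambda>t. T t x) ` {0..}))}"

end

(*
  If T(a) v = v, the orbit s \<mapsto> T(s) v is a-periodic, so by Fejer's theorem v is the limit of the
  Cesaro means of its Fourier sums on [0, a]. The k-th cosine and sine coefficients span a plane on
  which T acts by rotation with frequency 2 pi k / a. Norm continuity at infinity forces T(h) to move
  every a-periodic vector by at most half its norm for small h, whereas T(a / 2k) maps the k-th
  coefficient to its negative; hence almost all coefficients vanish and every periodic vector lies in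
  the span of the rotating vectors. On that span T(a) - Id is onto modulo vectors fixed by T(a), and
  boundedness of the semigroup excludes a fixed component in (T(a) - Id) x; so the kernel of the
  product lies in the span, by induction on the number of factors, and rotating vectors have compact
  orbits. If the growth bound is negative, no T(t) has a nonzero fixed vector and the kernel is trivial.
*)

theory Submission
  imports Defs
begin

lemma nonneg_additive_induct:
  fixes P :: "real \<Rightarrow> bool"
  assumes a: "a > 0" and base: "\<And>h. 0 \<le> h \<Longrightarrow> h \<le> a \<Longrightarrow> P h"
    and add: "\<And>x y. 0 \<le> x \<Longrightarrow> 0 \<le> y \<Longrightarrow> P x \<Longrightarrow> P y \<Longrightarrow> P (x + y)"
    and h: "0 \<le> h"
  shows "P h"
proof -
  have "\<forall>h. 0 \<le> h \<and> h \<le> real n * a \<longrightarrow> P h" for n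
  proof (induction n)
    case 0
    then show ?case using base a by auto
  next
    case (Suc n)
    show ?case
    proof (intro allI impI)
      fix h assume h: "0 \<le> h \<and> h \<le> real (Suc n) * a"
      show "P h"
      proof (cases "h \<le> real n * a")
        case True
        then show ?thesis using Suc h by blast
      next
        case False
        have "P (real n * a)" using Suc a by auto
        moreover have "P (h - real n * a)" using base False h by (auto simp: algebra_simps)
        ultimately have "P (real n * a + (h - real n * a))" using a False by (intro add) auto
        then show ?thesis by simp
      qed
    qed
  qed
  moreover obtain n where "h / a < real n" using reals_Archimedean2 by blast
  then have "h \<le> real n * a" using a by (simp add: field_simps)
  ultimately show ?thesis using h by blast
qed

lemma compact_closure_subset_compact:
  fixes A K :: "'a::metric_space set"
  assumes "A \<subseteq> K" and "compact K"
  shows "compact (closure A)"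
proof -
  have "closure A \<subseteq> K" using assms by (intro closure_minimal compact_imp_closed)
  then have "closure A = K \<inter> closure A" by blast
  then show ?thesis using compact_Int_closed[OF \<open>compact K\<close> closed_closure[of A]] by simp
qed

lemma cesaro_means_eventually_const:
  fixes G :: "nat \<Rightarrow> 'a::real_normed_vector"
  assumes "\<And>j. j \<ge> K \<Longrightarrow> G j = S"
  shows "(\<lambda>N. (1 / real N) *\<^sub>R (\<Sum>j<N. G j)) \<longlonglongrightarrow> S"
proof -
  define R where "R = (\<Sum>j<K. G j - S)"
  have "(1 / real N) *\<^sub>R R + S = (1 / real N) *\<^sub>R (\<Sum>j<N. G j)" if N: "N \<ge> Suc K" for N
  proof -
    have "(\<Sum>j<N. G j - S) = R + (\<Sum>j\<in>{K..<N}. G j - S)"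
      using sum.atLeastLessThan_concat[of 0 K N "\<lambda>j. G j - S"] N
      by (simp add: lessThan_atLeast0 R_def)
    also have "(\<Sum>j\<in>{K..<N}. G j - S) = 0" using assms by (intro sum.neutral) auto
    finally have "(\<Sum>j<N. G j) = R + real N *\<^sub>R S"
      by (simp add: sum_subtractf algebra_simps sum_constant_scaleR)
    then show ?thesis using N by (simp add: scaleR_add_right)
  qed
  then have "\<forall>\<^sub>F N in sequentially. (1 / real N) *\<^sub>R R + S = (1 / real N) *\<^sub>R (\<Sum>j<N. G j)"
    unfolding eventually_sequentially by blast
  moreover have "(\<lambda>N. (1 / real N) *\<^sub>R R + S) \<longlonglongrightarrow> 0 *\<^sub>R R + S"
    by (intro tendsto_intros)
  ultimately show ?thesis by (simp add: tendsto_cong)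
qed

lemma cos_mult_eq_1: "cos \<theta> = 1 \<Longrightarrow> cos (real k * \<theta>) = 1"
proof (induction k)
  case (Suc k)
  have "sin \<theta> = 0" using Suc.prems sin_cos_squared_add[of \<theta>] by simp
  then show ?case using Suc by (simp add: distrib_right cos_add)
qed simp

section \<open>Dirichlet and Fejer kernels\<close>

definition dirichlet_kernel :: "nat \<Rightarrow> real \<Rightarrow> real" where
  "dirichlet_kernel j \<theta> = 1 + 2 * (\<Sum>k\<in>{1..j}. cos (real k * \<theta>))"

definition fejer_kernel :: "nat \<Rightarrow> real \<Rightarrow> real" where
  "fejer_kernel N \<theta> = (\<Sum>j<N. dirichlet_kernel j \<theta>) / real N"

lemma dirichlet_kernel_mult_one_minus_cos:
  "dirichlet_kernel j \<theta> * (1 - cos \<theta>) = cos (real j * \<theta>) - cos (real (Suc j) * \<theta>)"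
proof (induction j)
  case 0
  then show ?case by (simp add: dirichlet_kernel_def)
next
  case (Suc j)
  define A where "A = real (Suc j) * \<theta>"
  have jA: "real j * \<theta> = A - \<theta>" and SucA: "real (Suc (Suc j)) * \<theta> = A + \<theta>"
    by (simp_all add: A_def algebra_simps)
  have IH: "dirichlet_kernel j \<theta> * (1 - cos \<theta>) = cos (A - \<theta>) - cos A"
    using Suc.IH unfolding jA A_def .
  have "dirichlet_kernel (Suc j) \<theta> * (1 - cos \<theta>)
      = dirichlet_kernel j \<theta> * (1 - cos \<theta>) + 2 * cos A - 2 * cos A * cos \<theta>"
    by (simp add: dirichlet_kernel_def A_def algebra_simps)
  also have "\<dots> = cos A - cos (A + \<theta>)"
    using IH cos_add[of A \<theta>] cos_diff[of A \<theta>] by simp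
  finally show ?case unfolding SucA A_def .
qed

lemma sum_dirichlet_kernel_mult_one_minus_cos:
  "(\<Sum>j<N. dirichlet_kernel j \<theta>) * (1 - cos \<theta>) = 1 - cos (real N * \<theta>)"
  unfolding sum_distrib_right dirichlet_kernel_mult_one_minus_cos
  by (subst sum_lessThan_telescope') simp

lemma fejer_kernel_nonneg: "fejer_kernel N \<theta> \<ge> 0"
proof (cases "cos \<theta> = 1")
  case True
  then have "dirichlet_kernel j \<theta> \<ge> 0" for j by (simp add: dirichlet_kernel_def cos_mult_eq_1)
  then show ?thesis unfolding fejer_kernel_def by (simp add: sum_nonneg)
next
  case False
  then have c: "1 - cos \<theta> > 0" using cos_le_one[of \<theta>] by linarith
  have "(\<Sum>j<N. dirichlet_kernel j \<theta>) * (1 - cos \<theta>) \<ge> 0"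
    unfolding sum_dirichlet_kernel_mult_one_minus_cos by simp
  then show ?thesis using c unfolding fejer_kernel_def by (simp add: zero_le_mult_iff)
qed

lemma fejer_kernel_le:
  assumes "N > 0" and "1 - cos \<theta> \<ge> c" and "c > 0"
  shows "fejer_kernel N \<theta> \<le> 2 / (real N * c)"
proof -
  have "(\<Sum>j<N. dirichlet_kernel j \<theta>) * (1 - cos \<theta>) \<le> 2"
    unfolding sum_dirichlet_kernel_mult_one_minus_cos using cos_ge_minus_one[of "real N * \<theta>"] by simp
  then have "(\<Sum>j<N. dirichlet_kernel j \<theta>) \<le> 2 / (1 - cos \<theta>)"
    using assms by (simp add: field_simps)
  also have "\<dots> \<le> 2 / c" using assms by (intro divide_left_mono) auto
  finally show ?thesis using assms unfolding fejer_kernel_def by (simp add: field_simps)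
qed

lemma continuous_on_fejer_kernel: "continuous_on S (\<lambda>s. fejer_kernel N (c * s))"
  unfolding fejer_kernel_def dirichlet_kernel_def divide_inverse by (intro continuous_intros)

lemma has_integral_cos_multiple:
  assumes a: "a > 0" and k: "k \<ge> 1"
  shows "((\<lambda>s. cos (real k * (2 * pi * s / a))) has_integral 0) {0..a}"
proof -
  define c where "c = real k * 2 * pi / a"
  have c: "c \<noteq> 0" using a k by (simp add: c_def)
  have "((\<lambda>s. sin (c * s) / c) has_real_derivative cos (c * s)) (at s within {0..a})" for s
    using c by (auto intro!: derivative_eq_intros)
  then have "((\<lambda>s. cos (c * s)) has_integral (sin (c * a) / c - sin (c * 0) / c)) {0..a}"
    using a by (intro fundamental_theorem_of_calculus)
      (auto simp: has_real_derivative_iff_has_vector_derivative[symmetric])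
  moreover have "sin (c * a) = 0"
    using sin_int_2pin[of "int k"] a by (simp add: c_def algebra_simps)
  moreover have "real k * (2 * pi * s / a) = c * s" for s by (simp add: c_def)
  ultimately show ?thesis by simp
qed

lemma has_integral_fejer_kernel:
  assumes a: "a > 0" and N: "N > 0"
  shows "((\<lambda>s. fejer_kernel N (2 * pi * s / a)) has_integral a) {0..a}"
proof -
  have "((\<lambda>s. dirichlet_kernel j (2 * pi * s / a)) has_integral a) {0..a}" for j
  proof -
    have "((\<lambda>s. 1 + 2 * (\<Sum>k\<in>{1..j}. cos (real k * (2 * pi * s / a))))
        has_integral (a + 2 * (\<Sum>k\<in>{1..j}. 0))) {0..a}"
      using a by (intro has_integral_add has_integral_mult_right has_integral_sum has_integral_cos_multiple)
        (use has_integral_const_real[of "1::real" 0 a] in auto)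
    then show ?thesis by (simp add: dirichlet_kernel_def)
  qed
  then have "((\<lambda>s. (\<Sum>j<N. dirichlet_kernel j (2 * pi * s / a)) / real N)
      has_integral ((\<Sum>j<N. a) / real N)) {0..a}"
    by (intro has_integral_divide has_integral_sum) auto
  then show ?thesis using N by (simp add: fejer_kernel_def)
qed

section \<open>Fejer means of continuous periodic functions\<close>

definition fourier_cos :: "real \<Rightarrow> (real \<Rightarrow> 'a::real_normed_vector) \<Rightarrow> nat \<Rightarrow> 'a" where
  "fourier_cos a f k = integral {0..a} (\<lambda>s. cos (real k * (2 * pi * s / a)) *\<^sub>R f s)"

definition fourier_sin :: "real \<Rightarrow> (real \<Rightarrow> 'a::real_normed_vector) \<Rightarrow> nat \<Rightarrow> 'a" where
  "fourier_sin a f k = integral {0..a} (\<lambda>s. sin (real k * (2 * pi * s / a)) *\<^sub>R f s)"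

lemma integral_fejer_kernel_scaleR:
  fixes f :: "real \<Rightarrow> 'a::banach"
  assumes a: "a > 0" and f: "continuous_on {0..a} f"
  shows "integral {0..a} (\<lambda>s. fejer_kernel N (2 * pi * s / a) *\<^sub>R f s)
       = (1 / real N) *\<^sub>R (\<Sum>j<N. fourier_cos a f 0 + 2 *\<^sub>R (\<Sum>k\<in>{1..j}. fourier_cos a f k))"
proof -
  have coeff: "((\<lambda>s. cos (real k * (2 * pi * s / a)) *\<^sub>R f s) has_integral fourier_cos a f k) {0..a}" for k
    unfolding fourier_cos_def using a
    by (intro integrable_integral integrable_continuous_real continuous_intros f) auto
  have "((\<lambda>s. dirichlet_kernel j (2 * pi * s / a) *\<^sub>R f s)
      has_integral (fourier_cos a f 0 + 2 *\<^sub>R (\<Sum>k\<in>{1..j}. fourier_cos a f k))) {0..a}" for j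
  proof -
    have "((\<lambda>s. cos (real 0 * (2 * pi * s / a)) *\<^sub>R f s
          + 2 *\<^sub>R (\<Sum>k\<in>{1..j}. cos (real k * (2 * pi * s / a)) *\<^sub>R f s))
        has_integral (fourier_cos a f 0 + 2 *\<^sub>R (\<Sum>k\<in>{1..j}. fourier_cos a f k))) {0..a}"
      by (intro has_integral_add has_integral_cmul has_integral_sum coeff) auto
    then show ?thesis
      by (rule has_integral_eq[rotated])
        (simp add: dirichlet_kernel_def scaleR_add_left scaleR_sum_left flip: scaleR_scaleR)
  qed
  then have "((\<lambda>s. (1 / real N) *\<^sub>R (\<Sum>j<N. dirichlet_kernel j (2 * pi * s / a) *\<^sub>R f s)) has_integral
      (1 / real N) *\<^sub>R (\<Sum>j<N. fourier_cos a f 0 + 2 *\<^sub>R (\<Sum>k\<in>{1..j}. fourier_cos a f k))) {0..a}"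
    by (intro has_integral_cmul has_integral_sum) auto
  then show ?thesis
    by (intro integral_unique, rule has_integral_eq[rotated])
      (simp add: fejer_kernel_def scaleR_sum_left[symmetric] divide_inverse mult.commute)
qed

lemma norm_fejer_mean_diff_le:
  fixes f :: "real \<Rightarrow> 'a::banach"
  assumes a: "a > 0" and N: "N > 0" and f: "continuous_on {0..a} f"
    and bound: "\<And>s. s \<in> {0..a} \<Longrightarrow>
      fejer_kernel N (2 * pi * s / a) * norm (f s - f 0) \<le> e * fejer_kernel N (2 * pi * s / a) + d"
  shows "norm ((1/a) *\<^sub>R integral {0..a} (\<lambda>s. fejer_kernel N (2 * pi * s / a) *\<^sub>R f s) - f 0) \<le> e + d"
proof -
  define F where "F s = fejer_kernel N (2 * pi * s / a)" for s
  have F: "(F has_integral a) {0..a}"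
    unfolding F_def by (rule has_integral_fejer_kernel[OF a N])
  have Fc: "continuous_on {0..a} F"
    unfolding F_def using continuous_on_fejer_kernel[of _ N "2 * pi / a"] by simp
  have Ff: "(\<lambda>s. F s *\<^sub>R f s) integrable_on {0..a}"
    by (intro integrable_continuous_real continuous_intros Fc f)
  have Fv: "((\<lambda>s. F s *\<^sub>R f 0) has_integral a *\<^sub>R f 0) {0..a}"
    using has_integral_scaleR_left[OF F] .
  have diff: "((\<lambda>s. F s *\<^sub>R (f s - f 0)) has_integral (integral {0..a} (\<lambda>s. F s *\<^sub>R f s) - a *\<^sub>R f 0)) {0..a}"
    using has_integral_diff[OF integrable_integral[OF Ff] Fv] by (simp add: scaleR_diff_right)
  have bound_int: "((\<lambda>s. e * F s + d) has_integral (e * a + a * d)) {0..a}"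
    using has_integral_const_real[of d 0 a] a by (intro has_integral_add has_integral_mult_right F) auto
  have "norm (integral {0..a} (\<lambda>s. F s *\<^sub>R (f s - f 0))) \<le> integral {0..a} (\<lambda>s. e * F s + d)"
  proof (rule integral_norm_bound_integral)
    show "norm (F s *\<^sub>R (f s - f 0)) \<le> e * F s + d" if "s \<in> {0..a}" for s
      using bound[OF that] fejer_kernel_nonneg by (simp add: F_def)
  qed (use diff bound_int in blast)+
  then have "norm (integral {0..a} (\<lambda>s. F s *\<^sub>R f s) - a *\<^sub>R f 0) \<le> (e + d) * a"
    unfolding integral_unique[OF diff] integral_unique[OF bound_int] by (simp add: algebra_simps)
  moreover have "(1/a) *\<^sub>R integral {0..a} (\<lambda>s. F s *\<^sub>R f s) - f 0
      = (1/a) *\<^sub>R (integral {0..a} (\<lambda>s. F s *\<^sub>R f s) - a *\<^sub>R f 0)"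
    using a by (simp add: scaleR_diff_right)
  ultimately show ?thesis
    using a unfolding F_def by (simp add: divide_le_eq)
qed

lemma one_minus_cos_bounded_below:
  assumes a: "a > 0" and \<eta>: "0 < \<eta>" "\<eta> \<le> a / 2"
  obtains c where "c > 0" and "\<And>s. \<eta> \<le> s \<Longrightarrow> s \<le> a - \<eta> \<Longrightarrow> c \<le> 1 - cos (2 * pi * s / a)"
proof
  define \<alpha> where "\<alpha> = 2 * pi * \<eta> / a"
  have \<alpha>: "0 < \<alpha>" "\<alpha> \<le> pi" using \<eta> a by (auto simp: \<alpha>_def field_simps)
  have "cos \<alpha> < cos 0" using \<alpha> by (intro cos_monotone_0_pi) auto
  then show "1 - cos \<alpha> > 0" by simp
  fix s assume s: "\<eta> \<le> s" "s \<le> a - \<eta>"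
  define \<theta> where "\<theta> = 2 * pi * s / a"
  have "\<alpha> \<le> \<theta>" unfolding \<theta>_def \<alpha>_def using s a
    by (intro divide_right_mono mult_left_mono) auto
  moreover have "2 * pi * (s + \<eta>) \<le> 2 * pi * a" using s by (intro mult_left_mono) auto
  then have "\<theta> \<le> 2 * pi - \<alpha>"
    using a by (simp add: \<theta>_def \<alpha>_def field_simps)
  ultimately have "cos \<theta> \<le> cos \<alpha>"
    using \<alpha> cos_monotone_0_pi_le[of \<alpha> "2 * pi - \<theta>"] cos_monotone_0_pi_le[of \<alpha> \<theta>]
    by (cases "\<theta> \<le> pi") auto
  then show "1 - cos \<alpha> \<le> 1 - cos (2 * pi * s / a)" by (simp add: \<theta>_def)
qed

lemma norm_diff_small_near_endpoints:
  fixes f :: "real \<Rightarrow> 'a::real_normed_vector"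
  assumes a: "a > 0" and f: "continuous_on {0..a} f" and per: "f a = f 0" and e: "e > 0"
  obtains \<eta> where "0 < \<eta>" and "\<eta> \<le> a / 2"
    and "\<And>s. s \<in> {0..a} \<Longrightarrow> s \<le> \<eta> \<or> a - \<eta> \<le> s \<Longrightarrow> norm (f s - f 0) \<le> e"
proof -
  have cont: "\<exists>d>0. \<forall>s\<in>{0..a}. dist s x < d \<longrightarrow> dist (f s) (f x) < e" if "x \<in> {0..a}" for x
    using f that e unfolding continuous_on_iff by blast
  obtain d0 where d0: "d0 > 0" "\<And>s. s \<in> {0..a} \<Longrightarrow> dist s 0 < d0 \<Longrightarrow> dist (f s) (f 0) < e"
    using cont[of 0] a by auto
  obtain d1 where d1: "d1 > 0" "\<And>s. s \<in> {0..a} \<Longrightarrow> dist s a < d1 \<Longrightarrow> dist (f s) (f a) < e"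
    using cont[of a] a by auto
  define \<eta> where "\<eta> = min (min d0 d1) a / 2"
  have \<eta>: "0 < \<eta>" "\<eta> < d0" "\<eta> < d1" "\<eta> \<le> a / 2" using d0 d1 a by (auto simp: \<eta>_def)
  have "norm (f s - f 0) \<le> e" if "s \<in> {0..a}" "s \<le> \<eta> \<or> a - \<eta> \<le> s" for s
    using that \<eta> d0(2)[of s] d1(2)[of s] per by (auto simp: dist_norm less_imp_le)
  with \<eta> that show ?thesis by blast
qed

lemma fejer_means_tendsto:
  fixes f :: "real \<Rightarrow> 'a::banach"
  assumes a: "a > 0" and f: "continuous_on {0..a} f" and per: "f a = f 0"
  shows "(\<lambda>N. (1/a) *\<^sub>R integral {0..a} (\<lambda>s. fejer_kernel N (2 * pi * s / a) *\<^sub>R f s)) \<longlonglongrightarrow> f 0"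
proof (rule LIMSEQ_I)
  fix r :: real assume r: "r > 0"
  define e where "e = r / 2"
  have e: "e > 0" using r by (simp add: e_def)
  obtain \<eta> where \<eta>: "0 < \<eta>" "\<eta> \<le> a / 2"
    and near: "\<And>s. s \<in> {0..a} \<Longrightarrow> s \<le> \<eta> \<or> a - \<eta> \<le> s \<Longrightarrow> norm (f s - f 0) \<le> e"
    using norm_diff_small_near_endpoints[OF a f per e] by blast
  obtain c where c: "c > 0" and mid: "\<And>s. \<eta> \<le> s \<Longrightarrow> s \<le> a - \<eta> \<Longrightarrow> c \<le> 1 - cos (2 * pi * s / a)"
    using one_minus_cos_bounded_below[OF a \<eta>] by blast
  have "bounded ((\<lambda>s. f s - f 0) ` {0..a})"
    by (intro compact_imp_bounded compact_continuous_image continuous_intros f) simp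
  then obtain B where B: "\<And>s. s \<in> {0..a} \<Longrightarrow> norm (f s - f 0) \<le> B"
    unfolding bounded_iff by blast
  have "B \<ge> 0" using B[of 0] a by simp
  obtain N0 :: nat where N0: "2 * B / (c * e) < real N0" using reals_Archimedean2 by blast
  show "\<exists>N0. \<forall>N\<ge>N0. norm ((1/a) *\<^sub>R integral {0..a} (\<lambda>s. fejer_kernel N (2 * pi * s / a) *\<^sub>R f s) - f 0) < r"
  proof (intro exI[of _ "Suc N0"] allI impI)
    fix N assume N: "N \<ge> Suc N0"
    define d where "d = 2 * B / (real N * c)"
    have "d \<ge> 0" using \<open>B \<ge> 0\<close> c by (simp add: d_def)
    have "2 * B / (c * e) < real N" using N0 N by linarith
    then have "d < e" using c e N by (simp add: d_def field_simps)
    have "norm ((1/a) *\<^sub>R integral {0..a} (\<lambda>s. fejer_kernel N (2 * pi * s / a) *\<^sub>R f s) - f 0) \<le> e + d"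
    proof (rule norm_fejer_mean_diff_le[OF a _ f])
      fix s assume s: "s \<in> {0..a}"
      let ?F = "fejer_kernel N (2 * pi * s / a)"
      show "?F * norm (f s - f 0) \<le> e * ?F + d"
      proof (cases "s \<le> \<eta> \<or> a - \<eta> \<le> s")
        case True
        then show ?thesis
          using mult_left_mono[OF near[OF s True] fejer_kernel_nonneg, of N "2 * pi * s / a"] \<open>d \<ge> 0\<close>
          by (simp add: mult.commute)
      next
        case False
        then have "?F \<le> 2 / (real N * c)" using mid[of s] c N by (intro fejer_kernel_le) auto
        then have "?F * norm (f s - f 0) \<le> 2 / (real N * c) * B"
          using B[OF s] fejer_kernel_nonneg c by (intro mult_mono) auto
        then show ?thesis using fejer_kernel_nonneg e by (simp add: d_def add_increasing)
      qed
    qed (use N in auto)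
    then show "norm ((1/a) *\<^sub>R integral {0..a} (\<lambda>s. fejer_kernel N (2 * pi * s / a) *\<^sub>R f s) - f 0) < r"
      using \<open>d < e\<close> by (simp add: e_def)
  qed
qed

lemma eq_finite_fourier_cos_sum:
  fixes f :: "real \<Rightarrow> 'a::banach"
  assumes a: "a > 0" and f: "continuous_on {0..a} f" and per: "f a = f 0"
    and K: "\<And>k. k > K \<Longrightarrow> fourier_cos a f k = 0"
  shows "f 0 = (1/a) *\<^sub>R (fourier_cos a f 0 + 2 *\<^sub>R (\<Sum>k\<in>{1..K}. fourier_cos a f k))"
proof -
  define G where "G j = fourier_cos a f 0 + 2 *\<^sub>R (\<Sum>k\<in>{1..j}. fourier_cos a f k)" for j
  have "G j = G K" if "j \<ge> K" for j
  proof -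
    have "(\<Sum>k\<in>{1..j}. fourier_cos a f k) = (\<Sum>k\<in>{1..K}. fourier_cos a f k) + (\<Sum>k\<in>{K<..j}. fourier_cos a f k)"
      using that by (subst sum.union_disjoint[symmetric]) (auto intro!: sum.cong)
    also have "(\<Sum>k\<in>{K<..j}. fourier_cos a f k) = 0" using K by (intro sum.neutral) auto
    finally show ?thesis by (simp add: G_def)
  qed
  then have "(\<lambda>N. (1/a) *\<^sub>R ((1 / real N) *\<^sub>R (\<Sum>j<N. G j))) \<longlonglongrightarrow> (1/a) *\<^sub>R G K"
    by (intro tendsto_intros cesaro_means_eventually_const)
  moreover have "(\<lambda>N. (1/a) *\<^sub>R ((1 / real N) *\<^sub>R (\<Sum>j<N. G j))) \<longlonglongrightarrow> f 0"
    using fejer_means_tendsto[OF a f per] by (simp add: integral_fejer_kernel_scaleR[OF a f] G_def)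
  ultimately show ?thesis using LIMSEQ_unique by (auto simp: G_def)
qed

section \<open>Vectors rotated by the semigroup\<close>

definition rotation_pair :: "(real \<Rightarrow> ('a::real_normed_vector \<Rightarrow>\<^sub>L 'a)) \<Rightarrow> real \<Rightarrow> 'a \<Rightarrow> 'a \<Rightarrow> bool" where
  "rotation_pair T \<nu> u w \<longleftrightarrow> (\<forall>t\<ge>0. T t u = cos (\<nu> * t) *\<^sub>R u + sin (\<nu> * t) *\<^sub>R w \<and>
                                   T t w = cos (\<nu> * t) *\<^sub>R w - sin (\<nu> * t) *\<^sub>R u)"

definition rotating_vectors :: "(real \<Rightarrow> ('a::real_normed_vector \<Rightarrow>\<^sub>L 'a)) \<Rightarrow> 'a set" where
  "rotating_vectors T = {u. \<exists>\<nu> w. rotation_pair T \<nu> u w}"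

lemma rotation_pair_swap: "rotation_pair T \<nu> u w \<Longrightarrow> rotation_pair T \<nu> w (- u)"
  unfolding rotation_pair_def by (simp add: blinfun.minus_right)

lemma rotation_pair_in_E_aap:
  assumes "rotation_pair T \<nu> u w"
  shows "u \<in> E_aap T"
proof -
  define K where "K = (\<lambda>p. fst p *\<^sub>R u + snd p *\<^sub>R w) ` ({-1..1::real} \<times> {-1..1::real})"
  have "compact K" unfolding K_def
    by (intro compact_continuous_image compact_Times compact_Icc) (auto intro!: continuous_intros)
  moreover have "(\<lambda>t. T t u) ` {0..} \<subseteq> K"
  proof
    fix y assume "y \<in> (\<lambda>t. T t u) ` {0..}"
    then obtain t where "t \<ge> 0" "y = T t u" by auto
    then have "y = cos (\<nu> * t) *\<^sub>R u + sin (\<nu> * t) *\<^sub>R w" using assms unfolding rotation_pair_def by auto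
    then show "y \<in> K" unfolding K_def by (intro image_eqI[of _ _ "(cos (\<nu> * t), sin (\<nu> * t))"]) auto
  qed
  ultimately show ?thesis unfolding E_aap_def using compact_closure_subset_compact by blast
qed

lemma subspace_E_aap: "subspace (E_aap T)"
  unfolding subspace_def
proof (intro conjI ballI allI)
  show "0 \<in> E_aap T" unfolding E_aap_def
    by (auto intro!: compact_closure_subset_compact[of _ "{0}"] simp: blinfun.zero_right)
next
  fix x y assume "x \<in> E_aap T" and "y \<in> E_aap T"
  let ?K = "{p + q | p q. p \<in> closure ((\<lambda>t. T t x) ` {0..}) \<and> q \<in> closure ((\<lambda>t. T t y) ` {0..})}"
  have "compact ?K" using \<open>x \<in> E_aap T\<close> \<open>y \<in> E_aap T\<close> unfolding E_aap_def by (intro compact_sums) auto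
  moreover have "(\<lambda>t. T t (x + y)) ` {0..} \<subseteq> ?K"
    by (auto simp: blinfun.add_right intro: closure_subset[THEN subsetD])
  ultimately show "x + y \<in> E_aap T" unfolding E_aap_def using compact_closure_subset_compact by blast
next
  fix c :: real and x assume "x \<in> E_aap T"
  let ?K = "(\<lambda>p. c *\<^sub>R p) ` closure ((\<lambda>t. T t x) ` {0..})"
  have "compact ?K" using \<open>x \<in> E_aap T\<close> unfolding E_aap_def by (intro compact_scaling) auto
  moreover have "(\<lambda>t. T t (c *\<^sub>R x)) ` {0..} \<subseteq> ?K"
    by (auto simp: blinfun.scaleR_right intro: closure_subset[THEN subsetD])
  ultimately show "c *\<^sub>R x \<in> E_aap T" unfolding E_aap_def using compact_closure_subset_compact by blast
qed

lemma span_rotating_vectors_subset_E_aap: "span (rotating_vectors T) \<subseteq> E_aap T"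
  using subspace_E_aap rotation_pair_in_E_aap
  by (intro span_minimal) (auto simp: rotating_vectors_def)

lemma rotating_vector_decomp:
  assumes a: "a \<ge> 0" and u: "u \<in> rotating_vectors T"
  obtains y0 z where "T a y0 = y0" and "z \<in> span (rotating_vectors T)" and "u = y0 + (T a z - z)"
proof -
  obtain \<nu> w where rot: "rotation_pair T \<nu> u w" using u by (auto simp: rotating_vectors_def)
  have uw: "u \<in> span (rotating_vectors T)" "w \<in> span (rotating_vectors T)"
    using rot rotation_pair_swap[OF rot] by (auto simp: rotating_vectors_def intro: span_base)
  define c s where "c = cos (\<nu> * a)" and "s = sin (\<nu> * a)"
  have Tu: "T a u = c *\<^sub>R u + s *\<^sub>R w" and Tw: "T a w = c *\<^sub>R w - s *\<^sub>R u"
    using rot a unfolding rotation_pair_def c_def s_def by auto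
  have cs: "c\<^sup>2 + s\<^sup>2 = 1" unfolding c_def s_def by simp
  show ?thesis
  proof (cases "c = 1")
    case True
    then have "T a u = u" using Tu cs by simp
    then show ?thesis by (intro that[of u 0]) (simp_all add: span_zero)
  next
    case False
    \<comment> \<open>on the plane spanned by u and w, T a acts as a rotation by the angle \<nu> a \<noteq> 0 mod 2\<pi>, so T a - id is invertible there\<close>
    define D where "D = (c - 1)\<^sup>2 + s\<^sup>2"
    have D: "D > 0" using False by (simp add: D_def add_pos_nonneg)
    define p q where "p = (c - 1) / D" and "q = - s / D"
    define z where "z = p *\<^sub>R u + q *\<^sub>R w"
    have "p * c - q * s - p = ((c - 1) * c + s * s - (c - 1)) / D"
      using D by (simp add: p_def q_def field_simps)
    also have "\<dots> = 1"
      using D by (simp add: D_def power2_eq_square algebra_simps)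
    finally have coeff_u: "p * c - q * s - p = 1" .
    have coeff_w: "p * s + q * c - q = 0"
      using D by (simp add: p_def q_def field_simps)
    have "T a z - z = p *\<^sub>R (c *\<^sub>R u + s *\<^sub>R w) + q *\<^sub>R (c *\<^sub>R w - s *\<^sub>R u) - z"
      unfolding z_def by (simp only: blinfun.add_right blinfun.scaleR_right Tu Tw)
    also have "\<dots> = (p * c - q * s - p) *\<^sub>R u + (p * s + q * c - q) *\<^sub>R w"
      unfolding z_def by (simp add: algebra_simps)
    finally have "u = 0 + (T a z - z)" by (simp add: coeff_u coeff_w)
    moreover have "z \<in> span (rotating_vectors T)" unfolding z_def using uw by (intro span_add span_scale)
    ultimately show ?thesis using that[of 0 z] by (simp add: blinfun.zero_right)
  qed
qed

lemma span_rotating_vectors_decomp: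
  assumes a: "a \<ge> 0" and y: "y \<in> span (rotating_vectors T)"
  obtains y0 z where "T a y0 = y0" and "z \<in> span (rotating_vectors T)" and "y = y0 + (T a z - z)"
proof -
  define R where "R = {x. \<exists>x0 z. T a x0 = x0 \<and> z \<in> span (rotating_vectors T) \<and> x = x0 + (T a z - z)}"
  have "subspace R"
    unfolding subspace_def
  proof (intro conjI ballI allI)
    show "0 \<in> R"
      unfolding R_def by (auto intro!: exI[of _ 0] span_zero)
    show "x + x' \<in> R" if x: "x \<in> R" and x': "x' \<in> R" for x x'
    proof -
      obtain x0 z where h: "T a x0 = x0" "z \<in> span (rotating_vectors T)" "x = x0 + (T a z - z)"
        using x unfolding R_def mem_Collect_eq by blast
      obtain x0' z' where h': "T a x0' = x0'" "z' \<in> span (rotating_vectors T)" "x' = x0' + (T a z' - z')"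
        using x' unfolding R_def mem_Collect_eq by blast
      show ?thesis unfolding R_def mem_Collect_eq
        by (intro exI[of _ "x0 + x0'"] exI[of _ "z + z'"] conjI)
          (simp_all add: h h' span_add blinfun.add_right algebra_simps)
    qed
    show "c *\<^sub>R x \<in> R" if x: "x \<in> R" for c x
    proof -
      obtain x0 z where h: "T a x0 = x0" "z \<in> span (rotating_vectors T)" "x = x0 + (T a z - z)"
        using x unfolding R_def mem_Collect_eq by blast
      show ?thesis unfolding R_def mem_Collect_eq
        by (intro exI[of _ "c *\<^sub>R x0"] exI[of _ "c *\<^sub>R z"] conjI)
          (simp_all add: h span_scale blinfun.scaleR_right scaleR_add_right scaleR_diff_right)
    qed
  qed
  moreover have "rotating_vectors T \<subseteq> R"
  proof
    fix u assume "u \<in> rotating_vectors T"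
    obtain y0 z where "T a y0 = y0" "z \<in> span (rotating_vectors T)" "u = y0 + (T a z - z)"
      by (rule rotating_vector_decomp[OF a \<open>u \<in> rotating_vectors T\<close>])
    then show "u \<in> R" unfolding R_def by auto
  qed
  ultimately have "span (rotating_vectors T) \<subseteq> R" by (simp add: span_minimal)
  with y obtain y0 z where "T a y0 = y0" "z \<in> span (rotating_vectors T)" "y = y0 + (T a z - z)"
    unfolding R_def by auto
  then show ?thesis by (rule that)
qed

locale bounded_C0_semigroup =
  fixes T :: "real \<Rightarrow> ('a::banach \<Rightarrow>\<^sub>L 'a)" and M :: real
  assumes C0: "C0_semigroup T" and norm_le: "\<And>t. t \<ge> 0 \<Longrightarrow> norm (T t) \<le> M"
begin

lemma T_0 [simp]: "T 0 x = x"
  using C0 by (simp add: C0_semigroup_def)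

lemma T_add: "0 \<le> s \<Longrightarrow> 0 \<le> t \<Longrightarrow> T (s + t) x = T s (T t x)"
  using C0 unfolding C0_semigroup_def by simp

lemma T_commute: "0 \<le> s \<Longrightarrow> 0 \<le> t \<Longrightarrow> T s (T t x) = T t (T s x)"
  by (metis T_add add.commute)

lemma M_nonneg: "0 \<le> M"
  using norm_le[of 0] norm_ge_zero order_trans by blast

lemma norm_T_apply_le: "t \<ge> 0 \<Longrightarrow> norm (T t x) \<le> M * norm x"
  by (meson norm_le mult_right_mono norm_blinfun norm_ge_zero order_trans)

lemma T_fixed_mult: "a \<ge> 0 \<Longrightarrow> T a u = u \<Longrightarrow> T (real n * a) u = u"
proof (induction n)
  case (Suc n)
  then show ?case using T_add[of "real n * a" a u] by (simp add: algebra_simps)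
qed simp

lemma norm_T_apply_diff_le:
  assumes "0 \<le> s" and "0 \<le> t"
  shows "norm (T t x - T s x) \<le> M * norm (T \<bar>t - s\<bar> x - x)"
proof (cases "s \<le> t")
  case True
  have "T t x - T s x = T s (T (t - s) x - x)"
    using T_add[of s "t - s" x] assms True by (simp add: blinfun.diff_right)
  then show ?thesis using norm_T_apply_le assms True by simp
next
  case False
  have "T t x - T s x = - T t (T (s - t) x - x)"
    using T_add[of t "s - t" x] assms False by (simp add: blinfun.diff_right)
  then show ?thesis using norm_T_apply_le assms False by simp
qed

lemma continuous_on_orbit: "continuous_on {0..} (\<lambda>t. T t x)"
  unfolding continuous_on_iff
proof (intro ballI allI impI)
  fix t e :: real assume "t \<in> {0..}" and "e > 0"
  have "((\<lambda>h. T h x) \<longlongrightarrow> x) (at_right 0)"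
    using C0 by (simp add: C0_semigroup_def)
  moreover have "e / (M + 1) > 0" using \<open>e > 0\<close> M_nonneg by simp
  ultimately have "\<forall>\<^sub>F h in at_right 0. dist (T h x) x < e / (M + 1)"
    by (rule tendstoD)
  then obtain d where d: "d > 0" "\<And>h. 0 < h \<Longrightarrow> h < d \<Longrightarrow> norm (T h x - x) < e / (M + 1)"
    unfolding eventually_at_right_field by (auto simp: dist_norm)
  have "norm (T s x - T t x) < e" if "s \<ge> 0" "\<bar>s - t\<bar> < d" for s
  proof -
    have "norm (T \<bar>s - t\<bar> x - x) \<le> e / (M + 1)"
      using d(2)[of "\<bar>s - t\<bar>"] that \<open>e / (M + 1) > 0\<close> by (cases "s = t") auto
    then have "M * norm (T \<bar>s - t\<bar> x - x) \<le> M * (e / (M + 1))"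
      using M_nonneg by (rule mult_left_mono)
    also have "\<dots> < e" using \<open>e > 0\<close> M_nonneg by (simp add: field_simps)
    finally show ?thesis
      using norm_T_apply_diff_le[of t s x] that \<open>t \<in> {0..}\<close> by simp
  qed
  then show "\<exists>d>0. \<forall>s\<in>{0..}. dist s t < d \<longrightarrow> dist (T s x) (T t x) < e"
    using d(1) by (auto simp: dist_norm dist_real_def)
qed

lemma integrable_weighted_orbit:
  assumes "0 \<le> c" and "continuous_on {c..d} \<phi>"
  shows "(\<lambda>s. \<phi> s *\<^sub>R T s v) integrable_on {c..d}"
  using assms continuous_on_subset[OF continuous_on_orbit, of "{c..d}"]
  by (intro integrable_continuous_real continuous_on_scaleR) auto

lemma apply_integral_periodic_weight:
  assumes a: "a > 0" and per: "T a v = v" and h: "0 \<le> h" "h \<le> a"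
    and \<phi>: "continuous_on UNIV \<phi>" and \<phi>_per: "\<And>s. \<phi> (s + a) = \<phi> s"
  shows "T h (integral {0..a} (\<lambda>s. \<phi> s *\<^sub>R T s v)) = integral {0..a} (\<lambda>s. \<phi> (s - h) *\<^sub>R T s v)"
proof -
  define f where "f = (\<lambda>s. \<phi> (s - h) *\<^sub>R T s v)"
  have f: "f integrable_on {c..d}" if "0 \<le> c" for c d
    unfolding f_def using that
    by (intro integrable_weighted_orbit continuous_on_compose2[OF \<phi>] continuous_intros) auto
  have "T h (integral {0..a} (\<lambda>s. \<phi> s *\<^sub>R T s v)) = integral {0..a} (\<lambda>s. T h (\<phi> s *\<^sub>R T s v))"
    using \<phi> by (intro integral_blinfun_apply[symmetric] integrable_weighted_orbit)
      (auto intro: continuous_on_subset)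
  also have "\<dots> = integral {0..a} (\<lambda>s. f (s + h))"
    using h T_add[of h _ v] by (intro integral_cong) (simp add: f_def blinfun.scaleR_right add.commute)
  also have "\<dots> = integral {h..a+h} f"
    using integral_shift_real_ivl[where f = f and a = h and b = "a + h" and c = h] by simp
  also have "\<dots> = integral {h..a} f + integral {a..a+h} f"
    using Henstock_Kurzweil_Integration.integral_combine[where a = h and c = a and b = "a + h" and f = f] h f by simp
  also have "integral {a..a+h} f = integral {0..h} (\<lambda>s. f (s + a))"
    using integral_shift_real_ivl[where f = f and a = a and b = "a + h" and c = a] by simp
  also have "\<dots> = integral {0..h} f"
  proof (rule integral_cong)
    fix s assume "s \<in> {0..h}"
    \<comment> \<open>both the weight and the orbit of v are a-periodic\<close>
    then show "f (s + a) = f s"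
      using \<phi>_per[of "s - h"] T_add[of s a v] a per by (simp add: f_def algebra_simps)
  qed
  also have "integral {h..a} f + integral {0..h} f = integral {0..a} f"
    using Henstock_Kurzweil_Integration.integral_combine[where a = 0 and c = h and b = a and f = f] h f by (simp add: add.commute)
  finally show ?thesis by (simp add: f_def)
qed

lemma rotation_pair_if_on_interval:
  assumes a: "a > 0" and rot: "\<And>t. 0 \<le> t \<Longrightarrow> t \<le> a \<Longrightarrow>
      T t u = cos (\<nu> * t) *\<^sub>R u + sin (\<nu> * t) *\<^sub>R w \<and> T t w = cos (\<nu> * t) *\<^sub>R w - sin (\<nu> * t) *\<^sub>R u"
  shows "rotation_pair T \<nu> u w"
proof -
  define P where "P t \<longleftrightarrow>
      T t u = cos (\<nu> * t) *\<^sub>R u + sin (\<nu> * t) *\<^sub>R w \<and> T t w = cos (\<nu> * t) *\<^sub>R w - sin (\<nu> * t) *\<^sub>R u" for t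
  have "P t" if "0 \<le> t" for t
  proof (rule nonneg_additive_induct[OF a _ _ that])
    show "P t" if "0 \<le> t" "t \<le> a" for t
      using rot that unfolding P_def by blast
    show "P (x + y)" if xy: "0 \<le> x" "0 \<le> y" "P x" "P y" for x y
    proof -
      have "T (x + y) u = cos (\<nu> * y) *\<^sub>R T x u + sin (\<nu> * y) *\<^sub>R T x w"
        using T_add[OF xy(1,2)] xy(4) unfolding P_def by (simp add: blinfun.add_right blinfun.scaleR_right)
      moreover have "T (x + y) w = cos (\<nu> * y) *\<^sub>R T x w - sin (\<nu> * y) *\<^sub>R T x u"
        using T_add[OF xy(1,2)] xy(4) unfolding P_def by (simp add: blinfun.diff_right blinfun.scaleR_right)
      ultimately show ?thesis
        using xy(3) unfolding P_def distrib_left cos_add sin_add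
        by (simp add: algebra_simps scaleR_add_right scaleR_diff_right)
    qed
  qed
  then show ?thesis unfolding rotation_pair_def P_def by blast
qed

lemma rotation_pair_fourier_coeffs:
  assumes a: "a > 0" and per: "T a v = v"
  shows "rotation_pair T (2 * pi * real k / a) (fourier_cos a (\<lambda>s. T s v) k) (fourier_sin a (\<lambda>s. T s v) k)"
proof (rule rotation_pair_if_on_interval[OF a])
  fix h assume h: "0 \<le> h" "h \<le> a"
  define \<nu> where "\<nu> = 2 * pi * real k / a"
  define C S where "C = fourier_cos a (\<lambda>s. T s v) k" and "S = fourier_sin a (\<lambda>s. T s v) k"
  define pc ps where "pc s = cos (real k * (2 * pi * s / a))" and "ps s = sin (real k * (2 * pi * s / a))" for s
  have cont: "continuous_on UNIV pc" "continuous_on UNIV ps"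
    unfolding pc_def ps_def using a by (auto intro!: continuous_intros)
  have "real k * (2 * pi * (s + a) / a) = real k * (2 * pi * s / a) + 2 * pi * of_int (int k)" for s
    using a by (simp add: field_simps)
  then have periodic: "pc (s + a) = pc s" "ps (s + a) = ps s" for s
    unfolding pc_def ps_def by (simp_all only: cos_add sin_add cos_int_2pin sin_int_2pin)
  have arg: "real k * (2 * pi * (s - h) / a) = real k * (2 * pi * s / a) - \<nu> * h" for s
    using a by (simp add: \<nu>_def field_simps)
  have shift: "pc (s - h) = cos (\<nu> * h) * pc s + sin (\<nu> * h) * ps s"
    "ps (s - h) = cos (\<nu> * h) * ps s - sin (\<nu> * h) * pc s" for s
    unfolding pc_def ps_def arg cos_diff sin_diff by (simp_all add: algebra_simps)
  have int: "(\<lambda>s. pc s *\<^sub>R T s v) integrable_on {0..a}" "(\<lambda>s. ps s *\<^sub>R T s v) integrable_on {0..a}"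
    using cont by (auto intro!: integrable_weighted_orbit intro: continuous_on_subset)
  have "T h C = integral {0..a} (\<lambda>s. pc (s - h) *\<^sub>R T s v)"
    unfolding C_def fourier_cos_def pc_def[symmetric]
    by (rule apply_integral_periodic_weight[OF a per h cont(1) periodic(1)])
  also have "\<dots> = integral {0..a} (\<lambda>s. cos (\<nu> * h) *\<^sub>R (pc s *\<^sub>R T s v) + sin (\<nu> * h) *\<^sub>R (ps s *\<^sub>R T s v))"
    by (simp add: shift scaleR_add_left)
  also have "\<dots> = cos (\<nu> * h) *\<^sub>R C + sin (\<nu> * h) *\<^sub>R S"
    unfolding C_def S_def fourier_cos_def fourier_sin_def pc_def[symmetric] ps_def[symmetric]
    by (simp only: integral_add[OF integrable_cmul[OF int(1)] integrable_cmul[OF int(2)]] integral_cmul)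
  finally have TC: "T h C = cos (\<nu> * h) *\<^sub>R C + sin (\<nu> * h) *\<^sub>R S" .
  have "T h S = integral {0..a} (\<lambda>s. ps (s - h) *\<^sub>R T s v)"
    unfolding S_def fourier_sin_def ps_def[symmetric]
    by (rule apply_integral_periodic_weight[OF a per h cont(2) periodic(2)])
  also have "\<dots> = integral {0..a} (\<lambda>s. cos (\<nu> * h) *\<^sub>R (ps s *\<^sub>R T s v) - sin (\<nu> * h) *\<^sub>R (pc s *\<^sub>R T s v))"
    by (simp add: shift scaleR_diff_left)
  also have "\<dots> = cos (\<nu> * h) *\<^sub>R S - sin (\<nu> * h) *\<^sub>R C"
    unfolding C_def S_def fourier_cos_def fourier_sin_def pc_def[symmetric] ps_def[symmetric]
    by (simp only: integral_diff[OF integrable_cmul[OF int(2)] integrable_cmul[OF int(1)]] integral_cmul)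
  finally have TS: "T h S = cos (\<nu> * h) *\<^sub>R S - sin (\<nu> * h) *\<^sub>R C" .
  show "T h C = cos (\<nu> * h) *\<^sub>R C + sin (\<nu> * h) *\<^sub>R S \<and> T h S = cos (\<nu> * h) *\<^sub>R S - sin (\<nu> * h) *\<^sub>R C"
    using TC TS by simp
qed

lemma growth_bound_le_0: "growth_bound T \<le> 0"
  unfolding growth_bound_def zero_ereal_def using norm_le by (intro Inf_lower) auto

lemma fixed_vector_eq_0_if_growth_bound_neg:
  assumes "growth_bound T < 0" and t: "t > 0" and u: "T t u = u"
  shows "u = 0"
proof (rule ccontr)
  assume "u \<noteq> 0"
  obtain \<omega> M' where \<omega>: "\<omega> < 0" and bound: "\<And>t. t \<ge> 0 \<Longrightarrow> norm (T t) \<le> M' * exp (\<omega> * t)"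
    using assms(1) unfolding growth_bound_def Inf_less_iff by (auto intro!: that)
  obtain n :: nat where n: "M' / (- \<omega> * t) < real n" using reals_Archimedean2 by blast
  have "norm u \<le> norm (T (real n * t)) * norm u"
    using norm_blinfun[of "T (real n * t)" u] T_fixed_mult[of t u n] t u by simp
  also have "\<dots> \<le> M' * exp (\<omega> * (real n * t)) * norm u"
    using bound t by (intro mult_right_mono) auto
  finally have "exp (- (\<omega> * (real n * t))) \<le> M'"
    using \<open>u \<noteq> 0\<close> by (simp add: exp_minus field_simps)
  moreover have "1 + (- (\<omega> * (real n * t))) \<le> exp (- (\<omega> * (real n * t)))"
    by (rule exp_ge_add_one_self)
  moreover have "M' < real n * (- \<omega> * t)" using n \<omega> t by (simp add: field_simps mult_neg_pos)
  ultimately show False by (simp add: algebra_simps)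
qed

lemma kernel_trivial_if_growth_bound_neg:
  assumes "growth_bound T < 0" and "\<forall>t\<in>set ts. t > 0"
    and "foldr (\<lambda>t y. (T t - id_blinfun) y) ts x = 0"
  shows "x = 0"
  using assms(2,3)
proof (induction ts)
  case (Cons t ts)
  let ?y = "foldr (\<lambda>t y. (T t - id_blinfun) y) ts x"
  have "T t ?y = ?y" using Cons.prems by (simp add: blinfun.diff_left)
  moreover have "t > 0" using Cons.prems by simp
  ultimately have "?y = 0" using fixed_vector_eq_0_if_growth_bound_neg[OF assms(1)] by blast
  then show ?case using Cons by simp
qed simp

lemma drift_eq_0:
  assumes a: "a \<ge> 0" and y0: "T a y0 = y0" and u: "T a u = u + y0"
  shows "y0 = 0"
proof (rule ccontr)
  assume "y0 \<noteq> 0"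
  have Tn: "T (real n * a) u = u + real n *\<^sub>R y0" for n
  proof (induction n)
    case (Suc n)
    have "T (real (Suc n) * a) u = T a (T (real n * a) u)"
      using T_add[of a "real n * a" u] a by (simp add: algebra_simps)
    then show ?case using Suc by (simp add: blinfun.add_right blinfun.scaleR_right u y0 algebra_simps)
  qed simp
  obtain n :: nat where n: "(M + 1) * norm u / norm y0 < real n" using reals_Archimedean2 by blast
  have "real n * norm y0 = norm (T (real n * a) u - u)" using Tn[of n] by simp
  also have "\<dots> \<le> norm (T (real n * a) u) + norm u" by (rule norm_triangle_ineq4)
  also have "\<dots> \<le> (M + 1) * norm u" using norm_T_apply_le[of "real n * a" u] a by (simp add: algebra_simps)
  finally show False using n \<open>y0 \<noteq> 0\<close> by (simp add: field_simps)
qed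

end

section \<open>Semigroups norm continuous at infinity\<close>

text \<open>The condition of norm continuity at infinity for growth bound 0, in epsilon-delta form.\<close>

locale asymptotically_norm_continuous_semigroup = bounded_C0_semigroup +
  assumes asymptotically_norm_continuous: "\<And>\<epsilon>. \<epsilon> > 0 \<Longrightarrow>
    \<exists>t0\<ge>0. \<exists>\<delta>>0. \<forall>h. 0 < h \<longrightarrow> h < \<delta> \<longrightarrow> norm (T t0 o\<^sub>L (id_blinfun - T h)) \<le> \<epsilon>"
begin

lemma fixed_vectors_uniformly_continuous:
  assumes a: "a > 0"
  obtains \<delta> where "\<delta> > 0" and "\<And>h u. 0 < h \<Longrightarrow> h < \<delta> \<Longrightarrow> T a u = u \<Longrightarrow> norm (T h u - u) \<le> norm u / 2"
proof -
  define \<epsilon> where "\<epsilon> = 1 / (2 * (M + 1))"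
  have "\<epsilon> > 0" using M_nonneg by (simp add: \<epsilon>_def)
  then obtain t0 \<delta> where t0: "t0 \<ge> 0" "\<delta> > 0"
    and small: "\<And>h. 0 < h \<Longrightarrow> h < \<delta> \<Longrightarrow> norm (T t0 o\<^sub>L (id_blinfun - T h)) \<le> \<epsilon>"
    using asymptotically_norm_continuous by blast
  obtain n :: nat where "t0 / a < real n" using reals_Archimedean2 by blast
  then have n: "t0 \<le> real n * a" using a by (simp add: field_simps)
  have "norm (T h u - u) \<le> norm u / 2" if h: "0 < h" "h < \<delta>" and u: "T a u = u" for h u
  proof -
    \<comment> \<open>T (n a) fixes T h u - u, so the increment can be pushed past time t0\<close>
    have "T (real n * a) (T h u - u) = T h u - u"
      using T_fixed_mult[of a u n] T_commute[of "real n * a" h u] a h u by (simp add: blinfun.diff_right)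
    then have "T h u - u = T (real n * a - t0) (T t0 (T h u - u))"
      using T_add[of "real n * a - t0" t0] n t0 by simp
    have "norm (T t0 (T h u - u)) = norm ((T t0 o\<^sub>L (id_blinfun - T h)) u)"
      by (simp add: blinfun.diff_right blinfun.diff_left norm_minus_commute)
    also have "\<dots> \<le> \<epsilon> * norm u"
      using norm_blinfun mult_right_mono[OF small[OF h] norm_ge_zero] by (rule order_trans)
    finally have increment: "norm (T t0 (T h u - u)) \<le> \<epsilon> * norm u" .
    have "norm (T h u - u) = norm (T (real n * a - t0) (T t0 (T h u - u)))"
      using \<open>T h u - u = T (real n * a - t0) (T t0 (T h u - u))\<close> by (rule arg_cong)
    also have "\<dots> \<le> M * norm (T t0 (T h u - u))"
      using n by (intro norm_T_apply_le) simp
    also have "\<dots> \<le> M * (\<epsilon> * norm u)"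
      using increment M_nonneg by (rule mult_left_mono)
    also have "\<dots> \<le> norm u / 2"
      using M_nonneg by (simp add: \<epsilon>_def field_simps)
    finally show ?thesis .
  qed
  then show ?thesis using that t0(2) by blast
qed

lemma fourier_cos_orbit_eventually_0:
  assumes a: "a > 0" and per: "T a v = v"
  obtains K where "\<And>k. k > K \<Longrightarrow> fourier_cos a (\<lambda>s. T s v) k = 0"
proof -
  obtain \<delta> where \<delta>: "\<delta> > 0"
    and slow: "\<And>h u. 0 < h \<Longrightarrow> h < \<delta> \<Longrightarrow> T a u = u \<Longrightarrow> norm (T h u - u) \<le> norm u / 2"
    using fixed_vectors_uniformly_continuous[OF a] by blast
  obtain K :: nat where K: "a / (2 * \<delta>) < real K" using reals_Archimedean2 by blast
  have "fourier_cos a (\<lambda>s. T s v) k = 0" if k: "k > K" for k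
  proof -
    define C where "C = fourier_cos a (\<lambda>s. T s v) k"
    define \<nu> where "\<nu> = 2 * pi * real k / a"
    have rot: "rotation_pair T \<nu> C (fourier_sin a (\<lambda>s. T s v) k)"
      unfolding \<nu>_def C_def by (rule rotation_pair_fourier_coeffs[OF a per])
    define h where "h = a / (2 * real k)"
    have "a / (2 * \<delta>) < real k" using k K by linarith
    then have h: "0 < h" "h < \<delta>" using a k \<delta> by (auto simp: h_def field_simps)
    have "\<nu> * a = 2 * pi * real k" using a by (simp add: \<nu>_def)
    then have fixed: "T a C = C"
      using rot a cos_int_2pin[of "int k"] sin_int_2pin[of "int k"] unfolding rotation_pair_def by auto
    \<comment> \<open>T h is a half turn of the plane of C, but T h moves C by at most half its norm\<close>
    moreover have half_turn: "T h C = - C"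
      using rot h a k unfolding rotation_pair_def by (auto simp: \<nu>_def h_def)
    have "norm (- C - C) \<le> norm C / 2" using slow[OF h fixed] half_turn by simp
    then have "2 * norm C \<le> norm C / 2" by (simp add: norm_minus_commute flip: scaleR_2)
    then show ?thesis unfolding C_def by simp
  qed
  then show ?thesis by (rule that)
qed

lemma fixed_vector_in_span_rotating_vectors:
  assumes a: "a > 0" and per: "T a v = v"
  shows "v \<in> span (rotating_vectors T)"
proof -
  obtain K where K: "\<And>k. k > K \<Longrightarrow> fourier_cos a (\<lambda>s. T s v) k = 0"
    using fourier_cos_orbit_eventually_0[OF a per] by blast
  have "continuous_on {0..a} (\<lambda>s. T s v)"
    using continuous_on_orbit by (rule continuous_on_subset) auto
  then have v: "v = (1/a) *\<^sub>R (fourier_cos a (\<lambda>s. T s v) 0 + 2 *\<^sub>R (\<Sum>k\<in>{1..K}. fourier_cos a (\<lambda>s. T s v) k))"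
    using eq_finite_fourier_cos_sum[OF a _ _ K] per by simp
  moreover have "fourier_cos a (\<lambda>s. T s v) k \<in> span (rotating_vectors T)" for k
    using rotation_pair_fourier_coeffs[OF a per] by (auto simp: rotating_vectors_def intro: span_base)
  ultimately show ?thesis by (subst v) (intro span_scale span_add span_sum)
qed

lemma in_span_rotating_vectors_if_increment:
  assumes a: "a > 0" and x: "T a x - x \<in> span (rotating_vectors T)"
  shows "x \<in> span (rotating_vectors T)"
proof -
  obtain y0 z where y0: "T a y0 = y0" and z: "z \<in> span (rotating_vectors T)"
    and eq: "T a x - x = y0 + (T a z - z)"
    by (rule span_rotating_vectors_decomp[OF less_imp_le[OF a] x])
  have "T a (x - z) = (x - z) + y0" using eq by (simp add: blinfun.diff_right algebra_simps)
  then have "T a (x - z) = x - z" using drift_eq_0[OF _ y0] a by simp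
  then have "x - z \<in> span (rotating_vectors T)" by (rule fixed_vector_in_span_rotating_vectors[OF a])
  from span_add[OF this z] show ?thesis by simp
qed

lemma in_span_rotating_vectors_if_foldr:
  assumes "\<forall>t\<in>set ts. t > 0"
    and "foldr (\<lambda>t y. (T t - id_blinfun) y) ts x \<in> span (rotating_vectors T)"
  shows "x \<in> span (rotating_vectors T)"
  using assms
proof (induction ts)
  case (Cons t ts)
  let ?y = "foldr (\<lambda>t y. (T t - id_blinfun) y) ts x"
  have "T t ?y - ?y \<in> span (rotating_vectors T)" using Cons.prems by (simp add: blinfun.diff_left)
  moreover have "t > 0" using Cons.prems by simp
  ultimately have "?y \<in> span (rotating_vectors T)"
    using in_span_rotating_vectors_if_increment by blast
  then show ?case using Cons by simp
qed simp

end

lemma (in bounded_C0_semigroup) asymptotically_norm_continuous_if_growth_bound_0: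
  assumes nc: "norm_continuous_at_infinity T" and "growth_bound T = 0"
  shows "asymptotically_norm_continuous_semigroup T M"
proof unfold_locales
  fix \<epsilon> :: real assume "\<epsilon> > 0"
  have "((\<lambda>t. Limsup (at_right 0) (\<lambda>h. ereal (norm (T t o\<^sub>L (id_blinfun - T h))))) \<longlongrightarrow> 0) at_top"
    using nc \<open>growth_bound T = 0\<close> unfolding norm_continuous_at_infinity_def by simp
  then have "\<forall>\<^sub>F t in at_top. Limsup (at_right 0) (\<lambda>h. ereal (norm (T t o\<^sub>L (id_blinfun - T h)))) < ereal \<epsilon>"
    using \<open>\<epsilon> > 0\<close> by (intro order_tendstoD(2)) auto
  then obtain N where N: "\<And>t. t \<ge> N \<Longrightarrow>
      Limsup (at_right 0) (\<lambda>h. ereal (norm (T t o\<^sub>L (id_blinfun - T h)))) < ereal \<epsilon>"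
    unfolding eventually_at_top_linorder by blast
  define t0 where "t0 = max N 0"
  have "t0 \<ge> 0" by (simp add: t0_def)
  have "Limsup (at_right 0) (\<lambda>h. ereal (norm (T t0 o\<^sub>L (id_blinfun - T h)))) < ereal \<epsilon>"
    by (rule N) (simp add: t0_def)
  then have "\<forall>\<^sub>F h in at_right 0. ereal (norm (T t0 o\<^sub>L (id_blinfun - T h))) < ereal \<epsilon>"
    by (intro Limsup_lessD)
  then obtain \<delta> where "\<delta> > 0" "\<And>h. 0 < h \<Longrightarrow> h < \<delta> \<Longrightarrow> norm (T t0 o\<^sub>L (id_blinfun - T h)) < \<epsilon>"
    unfolding eventually_at_right_field by auto
  then show "\<exists>t0\<ge>0. \<exists>\<delta>>0. \<forall>h. 0 < h \<longrightarrow> h < \<delta> \<longrightarrow> norm (T t0 o\<^sub>L (id_blinfun - T h)) \<le> \<epsilon>"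
    using \<open>t0 \<ge> 0\<close> by (auto intro: less_imp_le)
qed

theorem lemma2p13:
  fixes T :: "real \<Rightarrow> ('a::banach \<Rightarrow>\<^sub>L 'a)" and ts :: "real list"
  assumes "C0_semigroup T" and "bounded_semigroup T"
    and "norm_continuous_at_infinity T"
    and "\<forall>t\<in>set ts. t > 0"
  shows "{x. foldr (\<lambda>t y. (T t - id_blinfun) y) ts x = 0} \<subseteq> E_aap T"
proof
  fix x assume x: "x \<in> {x. foldr (\<lambda>t y. (T t - id_blinfun) y) ts x = 0}"
  obtain M where "\<forall>t\<ge>0. norm (T t) \<le> M"
    using assms(2) unfolding bounded_semigroup_def by blast
  then interpret bounded_C0_semigroup T M
    using assms(1) by unfold_locales auto
  consider "growth_bound T = 0" | "growth_bound T < 0"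
    using growth_bound_le_0 order_le_less by blast
  then show "x \<in> E_aap T"
  proof cases
    case 1
    then interpret asymptotically_norm_continuous_semigroup T M
      using asymptotically_norm_continuous_if_growth_bound_0 assms(3) by blast
    have "foldr (\<lambda>t y. (T t - id_blinfun) y) ts x \<in> span (rotating_vectors T)"
      using x span_zero by simp
    then have "x \<in> span (rotating_vectors T)"
      by (rule in_span_rotating_vectors_if_foldr[OF assms(4)])
    then show ?thesis using span_rotating_vectors_subset_E_aap by blast
  next
    case 2
    then have "x = 0" using kernel_trivial_if_growth_bound_neg assms(4) x by simp
    then show ?thesis using subspace_E_aap subspace_0 by blast
  qed
qed

end
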